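(* Let $M=A+\Delta-\sigma vv^{\mathsf T}$ be a generalized modularity matrix and let $S_1,\dots,S_k$ ($k\ge1$) be pairwise disjoint subsets of $V$ such that, for every $i=1,\dots,k$, $$e_{\mathrm{in}}(S_i)+\mathbb{1}_{S_i}^{\mathsf T}\Delta\mathbb{1}_{S_i}\ >\ \sum_{j\ne i}\mathbb{1}_{S_i}^{\mathsf T}A\mathbb{1}_{S_j}.$$ Then $M$ has at least $k-1$ positive eigenvalues (counted with multiplicity).
   Context: Let $V=\{1,\dots,n\}$ and let $A=(a_{ij})\in\mathbb{R}^{n\times n}$ be the adjacency matrix of an undirected connected weighted graph on $V$, possibly with loops, i.e. $A$ is symmetric, entrywise nonnegative and irreducible. A generalized modularity matrix is any matrix $M=A+\Delta-\sigma vv^{\mathsf T}$ where $\Delta$ is a real diagonal matrix, $v\ne0$ is entrywise nonnegative, and $\sigma>0$. For $S\subseteq V$, $\mathbb{1}_S$ is its characteristic vector and $e_{\mathrm{in}}(S)=\mathbb{1}_S^{\mathsf T}A\mathbb{1}_S=\sum_{i,j\in S}a_{ij}$ is the total internal edge weight (including loops). *)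

theory Defs
  imports "Jordan_Normal_Form.Char_Poly"
begin

text \<open>Vertices are indexed 0..n-1 (V = {1..n} shifted by one).\<close>

definition char_vec :: "nat \<Rightarrow> nat set \<Rightarrow> real vec" where
  "char_vec n S = vec n (\<lambda>i. if i \<in> S then 1 else 0)"

definition bil :: "real mat \<Rightarrow> nat set \<Rightarrow> nat set \<Rightarrow> real" where
  "bil A S T = char_vec (dim_row A) S \<bullet> (A *\<^sub>v char_vec (dim_col A) T)"

definition e_in :: "real mat \<Rightarrow> nat set \<Rightarrow> real" where
  "e_in A S = bil A S S"

definition outer :: "real vec \<Rightarrow> real mat" where
  "outer v = mat (dim_vec v) (dim_vec v) (\<lambda>(i,j). v $ i * v $ j)"

text \<open>Adjacency matrix of an undirected connected weighted graph (loops allowed):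
  symmetric, entrywise nonnegative, irreducible (the graph of positive entries is connected).\<close>
definition irreducible_mat :: "real mat \<Rightarrow> bool" where
  "irreducible_mat A \<longleftrightarrow>
     (\<forall>i<dim_row A. \<forall>j<dim_row A.
        (i, j) \<in> {(a, b). a < dim_row A \<and> b < dim_row A \<and> A $$ (a, b) > 0}\<^sup>*)"

definition weighted_adjacency :: "nat \<Rightarrow> real mat \<Rightarrow> bool" where
  "weighted_adjacency n A \<longleftrightarrow> A \<in> carrier_mat n n \<and> A\<^sup>T = A \<and>
     (\<forall>i<n. \<forall>j<n. A $$ (i, j) \<ge> 0) \<and> irreducible_mat A"

definition num_pos_eigenvalues :: "real mat \<Rightarrow> nat" where
  "num_pos_eigenvalues M =
     (\<Sum>x \<in> {x. x > 0 \<and> poly (char_poly M) x = 0}. order x (char_poly M))"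

end

theory Submission
  imports Defs "Jordan_Normal_Form.Schur_Decomposition"
begin

text \<open>For coefficients c with \<open>\<Sum>\<^sub>j c\<^sub>j (v \<bullet> 1\<^sub>S\<^sub>j) = 0\<close> the rank-one term of M
  vanishes, and the quadratic form of M at \<open>\<Sum>\<^sub>j c\<^sub>j 1\<^sub>S\<^sub>j\<close> becomes that of the
  k \<times> k matrix \<open>G\<^sub>i\<^sub>j = 1\<^sub>S\<^sub>i\<^sup>T (A + \<Delta>) 1\<^sub>S\<^sub>j\<close>. The hypothesis makes G strictly
  diagonally dominant with nonnegative off-diagonal entries, hence positive definite. So the
  form of M is positive on a (k-1)-dimensional space, and an orthogonal diagonalisation of M
  turns this into k-1 positive eigenvalues.\<close>

section \<open>Orthogonal diagonalisation of real symmetric matrices\<close>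

text \<open>Not the library's \<open>orthogonal_mat\<close>, which only asks for pairwise orthogonal columns.\<close>

definition orthonormal_mat :: "nat \<Rightarrow> real mat \<Rightarrow> bool" where
  "orthonormal_mat n Q \<longleftrightarrow> Q \<in> carrier_mat n n \<and> Q\<^sup>T * Q = 1\<^sub>m n"

lemma orthonormal_matD:
  assumes "orthonormal_mat n Q"
  shows "Q \<in> carrier_mat n n" "Q\<^sup>T * Q = 1\<^sub>m n" "Q * Q\<^sup>T = 1\<^sub>m n"
  using assms mat_mult_left_right_inverse[of "Q\<^sup>T" n Q] unfolding orthonormal_mat_def by auto

lemma orthonormal_mat_mult:
  assumes P: "orthonormal_mat n P" and Q: "orthonormal_mat n Q"
  shows "orthonormal_mat n (P * Q)"
proof -
  have P': "P \<in> carrier_mat n n" and Q': "Q \<in> carrier_mat n n"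
    using P Q by (auto dest: orthonormal_matD)
  have "(P * Q)\<^sup>T * (P * Q) = Q\<^sup>T * (P\<^sup>T * P) * Q"
    using P' Q' by (simp add: transpose_mult assoc_mult_mat[of _ n n _ n _ n])
  also have "\<dots> = 1\<^sub>m n" using orthonormal_matD[OF P] orthonormal_matD[OF Q] by simp
  finally show ?thesis unfolding orthonormal_mat_def using P' Q' by simp
qed

lemma orthonormal_mat_four_block_one:
  assumes "orthonormal_mat m Q"
  shows "orthonormal_mat (Suc m) (four_block_mat (1\<^sub>m 1) (0\<^sub>m 1 m) (0\<^sub>m m 1) Q)"
  using assms unfolding orthonormal_mat_def
  by (auto simp: transpose_four_block_mat[of _ 1 1 _ m _ m] mult_four_block_mat[of _ 1 1 _ m _ m _ _ 1 _ m]
      four_block_one_mat[of 1 m, simplified])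

lemma orthonormal_mat_of_cols:
  assumes us: "set us \<subseteq> carrier_vec n" "length us = n"
    and orthonormal: "\<And>i j. i < n \<Longrightarrow> j < n \<Longrightarrow> us ! i \<bullet> us ! j = (if i = j then 1 else 0)"
  shows "orthonormal_mat n (mat_of_cols n us)"
proof -
  let ?W = "mat_of_cols n us"
  have "?W\<^sup>T * ?W = 1\<^sub>m n"
  proof (rule eq_matI)
    fix i j assume "i < dim_row (1\<^sub>m n)" "j < dim_col (1\<^sub>m n)"
    then have i: "i < n" and j: "j < n" by auto
    have "(?W\<^sup>T * ?W) $$ (i, j) = col ?W i \<bullet> col ?W j"
      using i j us(2) by simp
    also have "\<dots> = 1\<^sub>m n $$ (i, j)"
      using i j us orthonormal[OF i j] by (simp add: col_mat_of_cols subsetD)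
    finally show "(?W\<^sup>T * ?W) $$ (i, j) = 1\<^sub>m n $$ (i, j)" .
  qed (use us in auto)
  then show ?thesis unfolding orthonormal_mat_def using us by auto
qed

lemma normalize_scalar_prod:
  fixes u w :: "real vec"
  assumes "u \<in> carrier_vec n" "w \<in> carrier_vec n"
  shows "((1 / sqrt (u \<bullet> u)) \<cdot>\<^sub>v u) \<bullet> ((1 / sqrt (w \<bullet> w)) \<cdot>\<^sub>v w)
      = (u \<bullet> w) / (sqrt (u \<bullet> u) * sqrt (w \<bullet> w))"
  using assms by (simp add: scalar_prod_smult_distrib smult_scalar_prod_distrib)

lemma normalize_scalar_prod_self:
  fixes u :: "real vec"
  assumes "u \<in> carrier_vec n" "u \<noteq> 0\<^sub>v n"
  shows "((1 / sqrt (u \<bullet> u)) \<cdot>\<^sub>v u) \<bullet> ((1 / sqrt (u \<bullet> u)) \<cdot>\<^sub>v u) = 1"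
proof -
  have "u \<bullet> u > 0" using conjugate_square_greater_0_vec[OF assms(1)] assms(2) by simp
  then show ?thesis using normalize_scalar_prod[OF assms(1,1)] by simp
qed

lemma exists_orthonormal_mat_first_col:
  fixes u :: "real vec"
  assumes u: "u \<in> carrier_vec n" and uu: "u \<bullet> u = 1"
  shows "\<exists>W. orthonormal_mat n W \<and> col W 0 = u"
proof -
  interpret cof_vec_space n "TYPE(real)" .
  have u0: "u \<noteq> 0\<^sub>v n" using uu u by auto
  then have n: "n > 0" using u by (cases n) auto
  define b where "b = basis_completion u"
  have b: "set b \<subseteq> carrier_vec n" "distinct b" "\<not> lin_dep (set b)" "length b = n" "hd b = u"
    using basis_completion[OF u u0] unfolding b_def by auto
  define ws where "ws = gram_schmidt n b"
  have ws: "set ws \<subseteq> carrier_vec n" "corthogonal ws" "length ws = n"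
    using gram_schmidt_result[OF b(1-3) ws_def] b(4) by auto
  obtain vs where "b = u # vs" using b(4,5) n by (cases b) auto
  then have "hd ws = u" unfolding ws_def using u by simp
  then have ws0: "ws ! 0 = u" using ws(3) n by (metis hd_conv_nth list.size(3) less_irrefl)
  have ws_orth: "\<And>i j. i < n \<Longrightarrow> j < n \<Longrightarrow> (ws ! i \<bullet> ws ! j = 0) = (i \<noteq> j)"
    using corthogonalD[OF ws(2)] ws(3) by simp
  have ws_nonzero: "\<And>i. i < n \<Longrightarrow> ws ! i \<noteq> 0\<^sub>v n"
    using ws_orth ws(1,3) by (metis nth_mem scalar_prod_left_zero subsetD)
  define us where "us = map (\<lambda>w. (1 / sqrt (w \<bullet> w)) \<cdot>\<^sub>v w) ws"
  have "orthonormal_mat n (mat_of_cols n us)"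
  proof (rule orthonormal_mat_of_cols)
    fix i j assume i: "i < n" and j: "j < n"
    have wi: "ws ! i \<in> carrier_vec n" and wj: "ws ! j \<in> carrier_vec n" using i j ws by auto
    show "us ! i \<bullet> us ! j = (if i = j then 1 else 0)"
      using i j ws(3) ws_orth[OF i j] normalize_scalar_prod[OF wi wj]
        normalize_scalar_prod_self[OF wi ws_nonzero[OF i]]
      unfolding us_def by auto
  qed (use ws in \<open>auto simp: us_def\<close>)
  moreover have "col (mat_of_cols n us) 0 = u"
    using n ws u ws0 uu unfolding us_def by (simp add: col_mat_of_cols)
  ultimately show ?thesis by blast
qed

lemma real_symmetric_eigenvalue_real:
  fixes M :: "real mat"
  assumes M: "M \<in> carrier_mat n n" and sym: "M\<^sup>T = M"
    and z: "eigenvalue (map_mat complex_of_real M) z"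
  shows "Im z = 0"
proof -
  let ?Mc = "map_mat complex_of_real M"
  obtain v where v: "v \<in> carrier_vec n" "v \<noteq> 0\<^sub>v n" "?Mc *\<^sub>v v = z \<cdot>\<^sub>v v"
    using z M unfolding eigenvalue_def eigenvector_def by auto
  \<comment> \<open>\<open>s = v\<^sup>* M v\<close> equals \<open>z |v|\<^sup>2\<close> and is real because M is symmetric\<close>
  define s where "s = (\<Sum>i<n. cnj (v $ i) * (?Mc *\<^sub>v v) $ i)"
  define R where "R = (\<Sum>i<n. (norm (v $ i))\<^sup>2)"
  have s_eigen: "s = z * of_real R"
  proof -
    have "s = (\<Sum>i<n. z * (cnj (v $ i) * v $ i))" unfolding s_def
      using v(1,3) by (intro sum.cong refl) (metis index_smult_vec(1) carrier_vecD lessThan_iff mult.left_commute)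
    also have "\<dots> = z * of_real R" unfolding R_def of_real_sum complex_norm_square
      by (simp add: sum_distrib_left mult.commute)
    finally show ?thesis .
  qed
  have s_entries: "s = (\<Sum>i<n. \<Sum>j<n. cnj (v $ i) * of_real (M $$ (i, j)) * v $ j)"
    unfolding s_def using v(1) M
    by (intro sum.cong refl) (auto simp: scalar_prod_def sum_distrib_left mult.assoc lessThan_atLeast0 intro!: sum.cong)
  have "cnj s = (\<Sum>i<n. \<Sum>j<n. v $ i * of_real (M $$ (i, j)) * cnj (v $ j))"
    unfolding s_entries by (simp add: cnj_sum)
  also have "\<dots> = (\<Sum>j<n. \<Sum>i<n. v $ i * of_real (M $$ (i, j)) * cnj (v $ j))"
    by (rule sum.swap)
  also have "\<dots> = s" unfolding s_entries
  proof (intro sum.cong refl)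
    fix i j assume "i \<in> {..<n}" "j \<in> {..<n}"
    then have "M $$ (j, i) = M $$ (i, j)" using sym M
      by (metis carrier_matD(1,2) index_transpose_mat(1) lessThan_iff)
    then show "v $ j * of_real (M $$ (j, i)) * cnj (v $ i) = cnj (v $ i) * of_real (M $$ (i, j)) * v $ j"
      by simp
  qed
  finally have "Im s = 0" by (metis Reals_cnj_iff complex_is_Real_iff)
  moreover have "R > 0"
  proof -
    obtain i where i: "i < n" "v $ i \<noteq> 0" using v(1,2) by (metis eq_vecI carrier_vecD index_zero_vec)
    then have "0 < (norm (v $ i))\<^sup>2" by simp
    also have "\<dots> \<le> R" unfolding R_def using i by (intro member_le_sum) auto
    finally show ?thesis .
  qed
  ultimately show ?thesis unfolding s_eigen by simp
qed

lemma real_symmetric_unit_eigenvector: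
  fixes M :: "real mat"
  assumes M: "M \<in> carrier_mat n n" and sym: "M\<^sup>T = M" and n: "n > 0"
  shows "\<exists>e u. u \<in> carrier_vec n \<and> u \<bullet> u = 1 \<and> M *\<^sub>v u = e \<cdot>\<^sub>v u"
proof -
  let ?Mc = "map_mat complex_of_real M"
  have Mc: "?Mc \<in> carrier_mat n n" using M by auto
  obtain as where cp: "char_poly ?Mc = (\<Prod>a\<leftarrow>as. [:- a, 1:])" and "length as = n"
    using char_poly_factorized[OF Mc] by blast
  then obtain z where "poly (char_poly ?Mc) z = 0" using n by (cases as) auto
  then have z: "eigenvalue ?Mc z" using eigenvalue_root_char_poly[OF Mc] by simp
  then have "z = of_real (Re z)"
    using real_symmetric_eigenvalue_real[OF M sym] by (simp add: complex_eq_iff)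
  then have "poly (char_poly ?Mc) (of_real (Re z)) = 0" using z eigenvalue_root_char_poly[OF Mc] by simp
  then have "eigenvalue M (Re z)"
    unfolding eigenvalue_root_char_poly[OF M] of_real_hom.char_poly_hom[OF M] of_real_hom.poly_map_poly
    by simp
  then obtain w where w: "w \<in> carrier_vec n" "w \<noteq> 0\<^sub>v n" "M *\<^sub>v w = Re z \<cdot>\<^sub>v w"
    using M unfolding eigenvalue_def eigenvector_def by auto
  define u where "u = (1 / sqrt (w \<bullet> w)) \<cdot>\<^sub>v w"
  have "u \<in> carrier_vec n" "u \<bullet> u = 1" unfolding u_def using w normalize_scalar_prod_self by auto
  moreover have "M *\<^sub>v u = Re z \<cdot>\<^sub>v u" unfolding u_def using M w
    by (simp add: mult_mat_vec smult_smult_assoc mult.commute)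
  ultimately show ?thesis by blast
qed

lemma orthonormal_conj_eigenvector_block:
  fixes M :: "real mat"
  assumes M: "M \<in> carrier_mat (Suc m) (Suc m)" and sym: "M\<^sup>T = M"
    and W: "orthonormal_mat (Suc m) W" and W0: "col W 0 = u" and eigen: "M *\<^sub>v u = e \<cdot>\<^sub>v u"
  shows "\<exists>B. B \<in> carrier_mat m m \<and> B\<^sup>T = B \<and>
    W\<^sup>T * M * W = four_block_mat (mat 1 1 (\<lambda>_. e)) (0\<^sub>m 1 m) (0\<^sub>m m 1) B"
proof -
  let ?n = "Suc m"
  have Wc: "W \<in> carrier_mat ?n ?n" and WTW: "W\<^sup>T * W = 1\<^sub>m ?n" using orthonormal_matD[OF W] by auto
  define N where "N = W\<^sup>T * M * W"
  have N: "N \<in> carrier_mat ?n ?n" unfolding N_def using Wc M by auto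
  have N_sym: "N\<^sup>T = N" unfolding N_def using Wc M sym
    by (simp add: transpose_mult[of _ ?n ?n _ ?n] assoc_mult_mat[of _ ?n ?n _ ?n _ ?n])
  have N_col0: "N $$ (i, 0) = (if i = 0 then e else 0)" if i: "i < ?n" for i
  proof -
    have "N $$ (i, 0) = row W\<^sup>T i \<bullet> col (M * W) 0"
      using i Wc M unfolding N_def by (simp add: assoc_mult_mat[of _ ?n ?n _ ?n _ ?n])
    also have "col (M * W) 0 = M *\<^sub>v col W 0" using Wc M by (simp add: mult_mat_vec_def)
    also have "\<dots> = e \<cdot>\<^sub>v u" using W0 eigen by simp
    also have "row W\<^sup>T i \<bullet> (e \<cdot>\<^sub>v u) = e * (W\<^sup>T * W) $$ (i, 0)"
      using i Wc W0 scalar_prod_smult_distrib[of "col W i" ?n u e] by (auto intro!: carrier_vecI)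
    finally show ?thesis using WTW i by simp
  qed
  define B where "B = mat m m (\<lambda>(i, j). N $$ (Suc i, Suc j))"
  have "B\<^sup>T = B"
    by (rule eq_matI) (use N_sym N in \<open>auto simp: B_def, metis index_transpose_mat(1) Suc_less_eq carrier_matD\<close>)
  moreover have "N = four_block_mat (mat 1 1 (\<lambda>_. e)) (0\<^sub>m 1 m) (0\<^sub>m m 1) B"
  proof (rule eq_matI)
    fix i j assume "i < dim_row (four_block_mat (mat 1 1 (\<lambda>_. e)) (0\<^sub>m 1 m) (0\<^sub>m m 1) B)"
      "j < dim_col (four_block_mat (mat 1 1 (\<lambda>_. e)) (0\<^sub>m 1 m) (0\<^sub>m m 1) B)"
    then have i: "i < ?n" and j: "j < ?n" by (auto simp: B_def)
    have "N $$ (0, j) = N\<^sup>T $$ (j, 0)" using N j by simp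
    then have "N $$ (0, j) = (if j = 0 then e else 0)" using N_sym N_col0[OF j] by simp
    then show "N $$ (i, j) = four_block_mat (mat 1 1 (\<lambda>_. e)) (0\<^sub>m 1 m) (0\<^sub>m m 1) B $$ (i, j)"
      using i j N_col0[OF i] by (cases i; cases j) (auto simp: B_def)
  qed (use N in \<open>auto simp: B_def\<close>)
  moreover have "B \<in> carrier_mat m m" unfolding B_def by simp
  ultimately show ?thesis unfolding N_def by blast
qed

theorem real_symmetric_spectral:
  fixes M :: "real mat"
  assumes "M \<in> carrier_mat n n" and "M\<^sup>T = M"
  shows "\<exists>Q L. orthonormal_mat n Q \<and> L \<in> carrier_mat n n \<and> diagonal_mat L \<and> M = Q * L * Q\<^sup>T"
  using assms
proof (induction n arbitrary: M)
  case 0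
  then show ?case
    by (intro exI[of _ "1\<^sub>m 0"] exI[of _ M]) (auto simp: diagonal_mat_def orthonormal_mat_def)
next
  case (Suc m M)
  let ?n = "Suc m"
  obtain e u where u: "u \<in> carrier_vec ?n" "u \<bullet> u = 1" and eigen: "M *\<^sub>v u = e \<cdot>\<^sub>v u"
    using real_symmetric_unit_eigenvector[OF Suc.prems] by auto
  obtain W where W: "orthonormal_mat ?n W" and W0: "col W 0 = u"
    using exists_orthonormal_mat_first_col[OF u] by auto
  have Wc: "W \<in> carrier_mat ?n ?n" and WWT: "W * W\<^sup>T = 1\<^sub>m ?n" using orthonormal_matD[OF W] by auto
  define E where "E = mat 1 1 (\<lambda>_. e)"
  obtain B where B: "B \<in> carrier_mat m m" "B\<^sup>T = B"
    and WMW: "W\<^sup>T * M * W = four_block_mat E (0\<^sub>m 1 m) (0\<^sub>m m 1) B"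
    using orthonormal_conj_eigenvector_block[OF Suc.prems W W0 eigen] unfolding E_def by blast
  obtain P L' where P: "orthonormal_mat m P" and L': "L' \<in> carrier_mat m m" "diagonal_mat L'"
    and BPL: "B = P * L' * P\<^sup>T"
    using Suc.IH[OF B] by blast
  define P' where "P' = four_block_mat (1\<^sub>m 1) (0\<^sub>m 1 m) (0\<^sub>m m 1) P"
  define L where "L = four_block_mat E (0\<^sub>m 1 m) (0\<^sub>m m 1) L'"
  have Pc: "P \<in> carrier_mat m m" using orthonormal_matD[OF P] by simp
  have P': "orthonormal_mat ?n P'" unfolding P'_def by (rule orthonormal_mat_four_block_one[OF P])
  then have P'c: "P' \<in> carrier_mat ?n ?n" using orthonormal_matD by auto
  have L: "L \<in> carrier_mat ?n ?n" unfolding L_def E_def using L' by auto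
  note assoc = assoc_mult_mat[of _ ?n ?n _ ?n _ ?n]
  have "(W * P') * L * (W * P')\<^sup>T = W * (P' * L * P'\<^sup>T) * W\<^sup>T"
    using Wc P'c L by (simp add: transpose_mult[of _ ?n ?n _ ?n] assoc)
  also have "P' * L * P'\<^sup>T = W\<^sup>T * M * W"
    unfolding WMW P'_def L_def BPL using Pc L'
    by (simp add: transpose_four_block_mat[of _ 1 1 _ m _ m] mult_four_block_mat[of _ 1 1 _ m _ m _ _ 1 _ m] E_def)
  also have "W * (W\<^sup>T * M * W) * W\<^sup>T = (W * W\<^sup>T) * M * (W * W\<^sup>T)"
    using Wc Suc.prems(1) by (simp add: assoc)
  finally have "M = (W * P') * L * (W * P')\<^sup>T" using WWT Suc.prems(1) by simp
  moreover have "diagonal_mat L"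
    using L' unfolding L_def E_def diagonal_mat_def by auto
  ultimately show ?case using orthonormal_mat_mult[OF W P'] L by blast
qed

section \<open>Counting positive eigenvalues\<close>

lemma count_list_filter: "count_list (filter P xs) x = (if P x then count_list xs x else 0)"
  by (induction xs) auto

lemma num_pos_roots_prod_linear_factors:
  fixes as :: "real list"
  defines "p \<equiv> \<Prod>a\<leftarrow>as. [:- a, 1:]"
  shows "(\<Sum>x \<in> {x. x > 0 \<and> poly p x = 0}. Polynomial.order x p) = length (filter (\<lambda>x. x > 0) as)"
proof -
  have order_p: "Polynomial.order x p = count_list as x" for x
  proof -
    have "Polynomial.order x p = sum_list (map (Polynomial.order x) (map (\<lambda>a. [:- a, 1:]) as))"
      unfolding p_def by (rule order_prod_list) auto
    also have "\<dots> = count_list as x" by (induction as) (auto simp: order_linear')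
    finally show ?thesis .
  qed
  have "{x. x > 0 \<and> poly p x = 0} = set (filter (\<lambda>x. x > 0) as)"
    unfolding p_def by (auto simp: poly_prod_list_zero_iff)
  then have "(\<Sum>x \<in> {x. x > 0 \<and> poly p x = 0}. Polynomial.order x p)
      = (\<Sum>x \<in> set (filter (\<lambda>x. x > 0) as). count_list (filter (\<lambda>x. x > 0) as) x)"
    by (auto simp: order_p count_list_filter intro!: sum.cong)
  also have "\<dots> = length (filter (\<lambda>x. x > 0) as)" by (rule sum_count_set) auto
  finally show ?thesis .
qed

lemma num_pos_eigenvalues_orthonormal_diag:
  fixes L Q :: "real mat"
  assumes Q: "orthonormal_mat n Q" and L: "L \<in> carrier_mat n n" "diagonal_mat L"
  shows "num_pos_eigenvalues (Q * L * Q\<^sup>T) = length (filter (\<lambda>i. L $$ (i, i) > 0) [0..<n])"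
proof -
  have "similar_mat_wit (Q * L * Q\<^sup>T) L Q Q\<^sup>T"
    using orthonormal_matD[OF Q] L unfolding similar_mat_wit_def Let_def by auto
  then have "char_poly (Q * L * Q\<^sup>T) = char_poly L"
    by (intro char_poly_similar) (auto simp: similar_mat_def)
  also have "\<dots> = (\<Prod>a\<leftarrow>map (\<lambda>i. L $$ (i, i)) [0..<n]. [:- a, 1:])"
    using char_poly_upper_triangular[OF L(1)] L
    by (auto simp: upper_triangular_def diagonal_mat_def diag_mat_def)
  finally have cp: "char_poly (Q * L * Q\<^sup>T) = (\<Prod>a\<leftarrow>map (\<lambda>i. L $$ (i, i)) [0..<n]. [:- a, 1:])" .
  show ?thesis
    unfolding num_pos_eigenvalues_def cp num_pos_roots_prod_linear_factors by (simp add: filter_map o_def)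
qed

lemma diagonal_mat_mult_vec:
  assumes D: "D \<in> carrier_mat n n" "diagonal_mat D" and w: "w \<in> carrier_vec n" and l: "l < n"
  shows "(D *\<^sub>v w) $ l = D $$ (l, l) * w $ l"
proof -
  have "(D *\<^sub>v w) $ l = (\<Sum>j\<in>{0..<n}. D $$ (l, j) * w $ j)"
    using D w l by (simp add: scalar_prod_def)
  also have "\<dots> = (\<Sum>j\<in>{0..<n}. if j = l then D $$ (l, l) * w $ l else 0)"
    by (rule sum.cong) (use l D in \<open>auto simp: diagonal_mat_def\<close>)
  finally show ?thesis using l by simp
qed

lemma diagonal_quadratic_form_nonpos:
  assumes L: "L \<in> carrier_mat n n" "diagonal_mat L" and y: "y \<in> carrier_vec n"
    and y_zero: "\<And>i. i < n \<Longrightarrow> L $$ (i, i) > 0 \<Longrightarrow> y $ i = 0"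
  shows "y \<bullet> (L *\<^sub>v y) \<le> (0 :: real)"
proof -
  have "y \<bullet> (L *\<^sub>v y) = (\<Sum>i\<in>{0..<n}. L $$ (i, i) * (y $ i * y $ i))"
    unfolding scalar_prod_def using y L
    by (intro sum.cong) (auto simp: diagonal_mat_mult_vec[OF L y] simp del: index_mult_mat_vec)
  also have "\<dots> \<le> 0"
  proof (rule sum_nonpos)
    fix i assume "i \<in> {0..<n}"
    then show "L $$ (i, i) * (y $ i * y $ i) \<le> 0"
      using y_zero[of i] by (cases "L $$ (i, i) > 0") (auto intro: mult_nonpos_nonneg)
  qed
  finally show ?thesis .
qed

lemma exists_nonzero_vec_orthogonal:
  fixes f :: "nat \<Rightarrow> 'a :: field vec"
  assumes "r < m" and f: "\<And>i. i < r \<Longrightarrow> f i \<in> carrier_vec m"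
  shows "\<exists>c \<in> carrier_vec m. c \<noteq> 0\<^sub>v m \<and> (\<forall>i<r. f i \<bullet> c = 0)"
proof -
  define E where "E = mat\<^sub>r m m (\<lambda>i. if i = m - 1 then 0\<^sub>v m else if i < r then f i else 0\<^sub>v m)"
  have E: "E \<in> carrier_mat m m" unfolding E_def by auto
  have "det E = 0" unfolding E_def by (rule det_row_0) (use assms in auto)
  then obtain c where c: "c \<in> carrier_vec m" "c \<noteq> 0\<^sub>v m" "E *\<^sub>v c = 0\<^sub>v m"
    using det_0_iff_vec_prod_zero_field[OF E] by blast
  have "f i \<bullet> c = 0" if i: "i < r" for i
  proof -
    have "f i \<bullet> c = (E *\<^sub>v c) $ i" using E i assms f unfolding E_def by (simp add: row_mat_of_row_fun)
    then show ?thesis using c(3) i assms by simp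
  qed
  then show ?thesis using c by blast
qed

theorem num_pos_eigenvalues_lower_bound:
  fixes M W C :: "real mat"
  assumes M: "M \<in> carrier_mat n n" "M\<^sup>T = M" and W: "W \<in> carrier_mat n m" and C: "C \<in> carrier_mat p m"
    and pos: "\<And>c. c \<in> carrier_vec m \<Longrightarrow> c \<noteq> 0\<^sub>v m \<Longrightarrow> C *\<^sub>v c = 0\<^sub>v p \<Longrightarrow>
       (W *\<^sub>v c) \<bullet> (M *\<^sub>v (W *\<^sub>v c)) > 0"
  shows "m \<le> num_pos_eigenvalues M + p"
proof (rule ccontr)
  assume contra: "\<not> m \<le> num_pos_eigenvalues M + p"
  obtain Q L where Q: "orthonormal_mat n Q" and L: "L \<in> carrier_mat n n" "diagonal_mat L"
    and MQL: "M = Q * L * Q\<^sup>T"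
    using real_symmetric_spectral[OF M] by blast
  have Qc: "Q \<in> carrier_mat n n" using orthonormal_matD[OF Q] by simp
  \<comment> \<open>c will lie in the kernel of C and make \<open>Q\<^sup>T W c\<close> vanish on the positive eigenvalues\<close>
  define ps where "ps = filter (\<lambda>i. L $$ (i, i) > 0) [0..<n]"
  have "num_pos_eigenvalues M = length ps"
    unfolding MQL ps_def by (rule num_pos_eigenvalues_orthonormal_diag[OF Q L])
  then have r: "p + length ps < m" using contra by simp
  define Y where "Y = Q\<^sup>T * W"
  have Y: "Y \<in> carrier_mat n m" unfolding Y_def using Qc W by auto
  define f where "f i = (if i < p then row C i else row Y (ps ! (i - p)))" for i
  have "f i \<in> carrier_vec m" for i
    unfolding f_def using C Y by auto
  then obtain c where c: "c \<in> carrier_vec m" "c \<noteq> 0\<^sub>v m" and orth: "\<forall>i < p + length ps. f i \<bullet> c = 0"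
    using exists_nonzero_vec_orthogonal[OF r, of f] by blast
  have "C *\<^sub>v c = 0\<^sub>v p"
  proof (rule eq_vecI)
    fix i assume "i < dim_vec (0\<^sub>v p)"
    then show "(C *\<^sub>v c) $ i = 0\<^sub>v p $ i" using orth[rule_format, of i] C unfolding f_def by simp
  qed (use C in simp)
  then have pos_c: "(W *\<^sub>v c) \<bullet> (M *\<^sub>v (W *\<^sub>v c)) > 0" using pos c by blast
  define y where "y = Q\<^sup>T *\<^sub>v (W *\<^sub>v c)"
  have y: "y \<in> carrier_vec n" unfolding y_def using Qc W c by simp
  have y_Y: "y = Y *\<^sub>v c" unfolding y_def Y_def using Qc W c
    by (simp add: assoc_mult_mat_vec[of _ n n _ m])
  have y_zero: "y $ i = 0" if "i < n" "L $$ (i, i) > 0" for i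
  proof -
    have "i \<in> set ps" unfolding ps_def using that by simp
    then obtain t where "t < length ps" "ps ! t = i" by (metis in_set_conv_nth)
    then show ?thesis using orth[rule_format, of "p + t"] that Y unfolding f_def y_Y by simp
  qed
  have "(W *\<^sub>v c) \<bullet> (M *\<^sub>v (W *\<^sub>v c)) = (W *\<^sub>v c) \<bullet> (Q *\<^sub>v (L *\<^sub>v y))"
    unfolding MQL y_def using Qc L W c by (simp add: assoc_mult_mat_vec[of _ n n _ n])
  also have "\<dots> = y \<bullet> (L *\<^sub>v y)"
    using transpose_vec_mult_scalar[OF Qc, of "L *\<^sub>v y" "W *\<^sub>v c"] Qc L W c y
    unfolding y_def by simp
  also have "\<dots> \<le> 0" by (rule diagonal_quadratic_form_nonpos[OF L y y_zero])
  finally show False using pos_c by simp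
qed

section \<open>Quadratic forms\<close>

lemma diag_dominant_quadratic_form_pos:
  fixes G :: "nat \<Rightarrow> nat \<Rightarrow> real" and c :: "nat \<Rightarrow> real"
  assumes sym: "\<And>i j. i < k \<Longrightarrow> j < k \<Longrightarrow> G i j = G j i"
    and nonneg: "\<And>i j. i < k \<Longrightarrow> j < k \<Longrightarrow> i \<noteq> j \<Longrightarrow> G i j \<ge> 0"
    and dominant: "\<And>i. i < k \<Longrightarrow> G i i > (\<Sum>j \<in> {..<k} - {i}. G i j)"
    and c: "l < k" "c l \<noteq> 0"
  shows "(\<Sum>i<k. \<Sum>j<k. c i * c j * G i j) > 0"
proof -
  define H where "H i j = (if i = j then 0 else G i j)" for i j
  define slack where "slack i = G i i - (\<Sum>j<k. H i j)" for i
  have slack_pos: "slack i > 0" if "i < k" for i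
  proof -
    have "(\<Sum>j<k. H i j) = (\<Sum>j \<in> {..<k} - {i}. H i j) + H i i"
      using that by (simp add: sum.remove[of "{..<k}" i] add.commute)
    then show ?thesis using dominant[OF that] unfolding slack_def H_def by simp
  qed
  have split_diag: "(\<Sum>i<k. \<Sum>j<k. c i * c j * G i j)
      = (\<Sum>i<k. c i * c i * G i i) + (\<Sum>i<k. \<Sum>j<k. c i * c j * H i j)"
  proof -
    have "(\<Sum>j<k. c i * c j * G i j) = c i * c i * G i i + (\<Sum>j<k. c i * c j * H i j)"
      if "i < k" for i
    proof -
      have "(\<Sum>j<k. c i * c j * G i j)
          = (\<Sum>j<k. (if j = i then c i * c i * G i i else 0) + c i * c j * H i j)"
        unfolding H_def by (intro sum.cong) auto
      then show ?thesis using that by (simp add: sum.distrib)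
    qed
    then show ?thesis by (simp add: sum.distrib)
  qed
  have swap: "(\<Sum>i<k. \<Sum>j<k. H i j * c j * c j) = (\<Sum>i<k. \<Sum>j<k. H i j * c i * c i)"
    by (subst sum.swap) (auto simp: H_def sym intro!: sum.cong)
  \<comment> \<open>\<open>\<Sum> H\<^sub>i\<^sub>j (c\<^sub>i + c\<^sub>j)\<^sup>2 \<ge> 0\<close> absorbs the off-diagonal part at the cost of the row sums of H\<close>
  have "(\<Sum>i<k. \<Sum>j<k. H i j * (c i + c j)\<^sup>2)
      = (\<Sum>i<k. \<Sum>j<k. H i j * c i * c i + H i j * c j * c j + 2 * (c i * c j * H i j))"
    by (intro sum.cong refl) (simp add: power2_eq_square algebra_simps)
  also have "\<dots> = 2 * (\<Sum>i<k. \<Sum>j<k. H i j * c i * c i) + 2 * (\<Sum>i<k. \<Sum>j<k. c i * c j * H i j)"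
    unfolding sum.distrib swap by (simp add: sum_distrib_left)
  also have "(\<Sum>i<k. \<Sum>j<k. H i j * c i * c i) = (\<Sum>i<k. c i * c i * (\<Sum>j<k. H i j))"
    by (simp add: sum_distrib_left mult.commute mult.left_commute)
  finally have "(\<Sum>i<k. \<Sum>j<k. H i j * (c i + c j)\<^sup>2)
      = 2 * (\<Sum>i<k. c i * c i * (\<Sum>j<k. H i j)) + 2 * (\<Sum>i<k. \<Sum>j<k. c i * c j * H i j)" .
  then have "(\<Sum>i<k. \<Sum>j<k. c i * c j * G i j)
      = (\<Sum>i<k. c i * c i * slack i) + (\<Sum>i<k. \<Sum>j<k. H i j * (c i + c j)\<^sup>2) / 2"
    unfolding split_diag slack_def by (simp add: right_diff_distrib sum_subtractf field_simps)
  moreover have "(\<Sum>i<k. \<Sum>j<k. H i j * (c i + c j)\<^sup>2) \<ge> 0"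
    using nonneg by (intro sum_nonneg) (simp add: H_def)
  moreover have "(\<Sum>i<k. c i * c i * slack i) > 0"
  proof -
    have "0 < c l * c l * slack l" using c slack_pos[OF c(1)] by (auto simp: zero_less_mult_iff linorder_neq_iff)
    also have "\<dots> \<le> (\<Sum>i<k. c i * c i * slack i)"
      using c less_imp_le[OF slack_pos]
      by (intro member_le_sum) (auto intro!: mult_nonneg_nonneg[OF zero_le_square])
    finally show ?thesis .
  qed
  ultimately show ?thesis by simp
qed

lemma quadratic_form_mult_mat_vec:
  fixes B W :: "real mat"
  assumes B: "B \<in> carrier_mat n n" and W: "W \<in> carrier_mat n k" and c: "c \<in> carrier_vec k"
  shows "(W *\<^sub>v c) \<bullet> (B *\<^sub>v (W *\<^sub>v c)) = (\<Sum>i<k. \<Sum>j<k. c $ i * c $ j * (col W i \<bullet> (B *\<^sub>v col W j)))"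
proof -
  define G where "G = W\<^sup>T * B * W"
  have G: "G \<in> carrier_mat k k" unfolding G_def using W B by auto
  have G_entry: "G $$ (i, j) = col W i \<bullet> (B *\<^sub>v col W j)" if "i < k" "j < k" for i j
  proof -
    have "G = W\<^sup>T * (B * W)" unfolding G_def using W B by (simp add: assoc_mult_mat[of _ k n _ n _ k])
    then show ?thesis using that W B by (simp add: col_mult2 mult_mat_vec_def)
  qed
  have "(W *\<^sub>v c) \<bullet> (B *\<^sub>v (W *\<^sub>v c)) = (W\<^sup>T *\<^sub>v (B *\<^sub>v (W *\<^sub>v c))) \<bullet> c"
    using transpose_vec_mult_scalar[OF W c, of "B *\<^sub>v (W *\<^sub>v c)"] W B c
    by (simp add: comm_scalar_prod[of _ n])
  also have "W\<^sup>T *\<^sub>v (B *\<^sub>v (W *\<^sub>v c)) = G *\<^sub>v c" unfolding G_def using W B c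
    by (simp add: assoc_mult_mat[of _ k n _ n _ k] assoc_mult_mat_vec[of _ k n _ k] assoc_mult_mat_vec[of _ n n _ k])
  also have "(G *\<^sub>v c) \<bullet> c = (\<Sum>i<k. (\<Sum>j<k. G $$ (i, j) * c $ j) * c $ i)"
    using G c by (simp add: scalar_prod_def lessThan_atLeast0)
  also have "\<dots> = (\<Sum>i<k. \<Sum>j<k. c $ i * c $ j * (col W i \<bullet> (B *\<^sub>v col W j)))"
    by (intro sum.cong refl) (simp add: G_entry sum_distrib_left sum_distrib_right algebra_simps)
  finally show ?thesis .
qed

section \<open>Generalized modularity matrices\<close>

lemma char_vec_carrier [simp]: "char_vec n S \<in> carrier_vec n"
  unfolding char_vec_def by simp

lemma bil_sym:
  fixes B :: "real mat"
  assumes B: "B \<in> carrier_mat n n" "B\<^sup>T = B"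
  shows "bil B S T = bil B T S"
proof -
  have "bil B S T = (B\<^sup>T *\<^sub>v char_vec n S) \<bullet> char_vec n T"
    unfolding bil_def using B transpose_vec_mult_scalar[of B n n "char_vec n T" "char_vec n S"] by simp
  also have "\<dots> = bil B T S"
    unfolding bil_def using B by (simp add: comm_scalar_prod[of _ n])
  finally show ?thesis .
qed

lemma bil_nonneg:
  fixes B :: "real mat"
  assumes B: "B \<in> carrier_mat n n" and nonneg: "\<forall>i<n. \<forall>j<n. B $$ (i, j) \<ge> 0"
  shows "bil B S T \<ge> 0"
  unfolding bil_def char_vec_def using B nonneg
  by (auto simp: scalar_prod_def intro!: sum_nonneg mult_nonneg_nonneg)

lemma bil_diagonal_disjoint:
  fixes D :: "real mat"
  assumes D: "D \<in> carrier_mat n n" "diagonal_mat D" and disjoint: "S \<inter> T = {}"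
  shows "bil D S T = 0"
proof -
  have "bil D S T = (\<Sum>i\<in>{0..<n}. (if i \<in> S then 1 else 0) * (D $$ (i, i) * (if i \<in> T then 1 else 0)))"
    unfolding bil_def using D
    by (auto simp: scalar_prod_def diagonal_mat_mult_vec[OF D] char_vec_def simp del: index_mult_mat_vec
        intro!: sum.cong)
  also have "\<dots> = 0" using disjoint by (intro sum.neutral) auto
  finally show ?thesis .
qed

lemma diagonal_mat_transpose:
  assumes "D \<in> carrier_mat n n" "diagonal_mat D"
  shows "D\<^sup>T = D"
  by (rule eq_matI) (use assms in \<open>auto simp: diagonal_mat_def, metis\<close>)

lemma smult_outer_mult_vec:
  assumes "v \<in> carrier_vec n" "w \<in> carrier_vec n"
  shows "(\<sigma> \<cdot>\<^sub>m outer v) *\<^sub>v w = (\<sigma> * (v \<bullet> w)) \<cdot>\<^sub>v v"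
  using assms by (intro eq_vecI) (auto simp: outer_def scalar_prod_def sum_distrib_left algebra_simps)

lemma modularity_mat_symmetric:
  fixes A D :: "real mat"
  assumes A: "A \<in> carrier_mat n n" "A\<^sup>T = A" and D: "D \<in> carrier_mat n n" "diagonal_mat D"
    and v: "v \<in> carrier_vec n"
  shows "(A + D - \<sigma> \<cdot>\<^sub>m outer v)\<^sup>T = A + D - \<sigma> \<cdot>\<^sub>m outer v"
proof -
  have "(\<sigma> \<cdot>\<^sub>m outer v)\<^sup>T = \<sigma> \<cdot>\<^sub>m outer v" by (rule eq_matI) (auto simp: outer_def)
  then show ?thesis using A D v diagonal_mat_transpose[OF D]
    by (simp add: transpose_add transpose_minus[of _ n n] outer_def)
qed

lemma modularity_form_char_vec:
  fixes A D :: "real mat"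
  assumes A: "A \<in> carrier_mat n n" and D: "D \<in> carrier_mat n n" and v: "v \<in> carrier_vec n"
  shows "char_vec n X \<bullet> ((A + D - \<sigma> \<cdot>\<^sub>m outer v) *\<^sub>v char_vec n Y)
    = bil A X Y + bil D X Y - \<sigma> * ((v \<bullet> char_vec n X) * (v \<bullet> char_vec n Y))"
proof -
  let ?x = "char_vec n X" and ?y = "char_vec n Y"
  have Ov: "outer v \<in> carrier_mat n n" using v by (simp add: outer_def)
  have "(A + D - \<sigma> \<cdot>\<^sub>m outer v) *\<^sub>v ?y = A *\<^sub>v ?y + D *\<^sub>v ?y - (\<sigma> * (v \<bullet> ?y)) \<cdot>\<^sub>v v"
    using A D Ov v
    by (simp add: minus_mult_distrib_mat_vec[of _ n n] add_mult_distrib_mat_vec[of _ n n]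
        smult_outer_mult_vec)
  then show ?thesis
    unfolding bil_def using A D v
    by (simp add: scalar_prod_minus_distrib[of _ n] scalar_prod_add_distrib[of _ n]
        comm_scalar_prod[of ?x n v] algebra_simps)
qed

lemma modularity_form_pos:
  fixes A D :: "real mat" and S :: "nat \<Rightarrow> nat set" and c :: "nat \<Rightarrow> real"
  assumes A: "A \<in> carrier_mat n n" "A\<^sup>T = A" "\<forall>i<n. \<forall>j<n. A $$ (i, j) \<ge> 0"
    and D: "D \<in> carrier_mat n n" "diagonal_mat D" and v: "v \<in> carrier_vec n"
    and disjoint: "\<forall>i<k. \<forall>j<k. i \<noteq> j \<longrightarrow> S i \<inter> S j = {}"
    and dominant: "\<forall>i<k. e_in A (S i) + bil D (S i) (S i) > (\<Sum>j \<in> {..<k} - {i}. bil A (S i) (S j))"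
    and c: "i0 < k" "c i0 \<noteq> 0" and orth: "(\<Sum>i<k. c i * (v \<bullet> char_vec n (S i))) = 0"
  shows "(\<Sum>i<k. \<Sum>j<k. c i * c j * (char_vec n (S i) \<bullet> ((A + D - \<sigma> \<cdot>\<^sub>m outer v) *\<^sub>v char_vec n (S j)))) > 0"
proof -
  define G where "G i j = bil A (S i) (S j) + bil D (S i) (S j)" for i j
  have "(\<Sum>i<k. \<Sum>j<k. c i * c j * (char_vec n (S i) \<bullet> ((A + D - \<sigma> \<cdot>\<^sub>m outer v) *\<^sub>v char_vec n (S j))))
      = (\<Sum>i<k. \<Sum>j<k. c i * c j * G i j)
        - \<sigma> * ((\<Sum>i<k. c i * (v \<bullet> char_vec n (S i))) * (\<Sum>j<k. c j * (v \<bullet> char_vec n (S j))))"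
    unfolding modularity_form_char_vec[OF A(1) D(1) v] G_def
    by (simp add: right_diff_distrib sum_subtractf sum_distrib_left sum_distrib_right algebra_simps)
  also have "\<dots> = (\<Sum>i<k. \<Sum>j<k. c i * c j * G i j)" using orth by simp
  also have "\<dots> > 0"
  proof (rule diag_dominant_quadratic_form_pos[where l = i0 and c = c])
    fix i j assume "i < k" "j < k"
    then show "G i j = G j i" unfolding G_def using bil_sym A D diagonal_mat_transpose[OF D] by metis
  next
    fix i j assume "i < k" "j < k" "i \<noteq> j"
    then show "G i j \<ge> 0"
      unfolding G_def using bil_nonneg[OF A(1,3)] bil_diagonal_disjoint[OF D] disjoint by simp
  next
    fix i assume i: "i < k"
    have "(\<Sum>j \<in> {..<k} - {i}. G i j) = (\<Sum>j \<in> {..<k} - {i}. bil A (S i) (S j))"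
      unfolding G_def using i bil_diagonal_disjoint[OF D] disjoint by (intro sum.cong) auto
    then show "G i i > (\<Sum>j \<in> {..<k} - {i}. G i j)" using dominant i unfolding G_def e_in_def by simp
  qed (use c in auto)
  finally show ?thesis .
qed

theorem mainTheorem12:
  fixes n k :: nat and A D :: "real mat" and v :: "real vec" and \<sigma> :: real
    and S :: "nat \<Rightarrow> nat set"
  assumes "weighted_adjacency n A"
    and "D \<in> carrier_mat n n" and "diagonal_mat D"
    and "v \<in> carrier_vec n" and "v \<noteq> 0\<^sub>v n" and "\<forall>i<n. v $ i \<ge> 0"
    and "\<sigma> > 0"
    and "k \<ge> 1"
    and "\<forall>i<k. S i \<subseteq> {..<n}"
    and "\<forall>i<k. \<forall>j<k. i \<noteq> j \<longrightarrow> S i \<inter> S j = {}"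
    and "\<forall>i<k. e_in A (S i) + bil D (S i) (S i) > (\<Sum>j \<in> {..<k} - {i}. bil A (S i) (S j))"
  shows "num_pos_eigenvalues (A + D - \<sigma> \<cdot>\<^sub>m outer v) \<ge> k - 1"
proof -
  have A: "A \<in> carrier_mat n n" "A\<^sup>T = A" "\<forall>i<n. \<forall>j<n. A $$ (i, j) \<ge> 0"
    using assms(1) unfolding weighted_adjacency_def by auto
  note D = assms(2,3) and v = assms(4)
  define M where "M = A + D - \<sigma> \<cdot>\<^sub>m outer v"
  define W where "W = mat_of_cols n (map (\<lambda>j. char_vec n (S j)) [0..<k])"
  define C where "C = mat_of_rows k [vec k (\<lambda>j. v \<bullet> char_vec n (S j))]"
  have M: "M \<in> carrier_mat n n" "M\<^sup>T = M"
    unfolding M_def using A D v modularity_mat_symmetric[OF A(1,2) D v] by (auto simp: outer_def)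
  have W: "W \<in> carrier_mat n k" and C: "C \<in> carrier_mat 1 k" unfolding W_def C_def by auto
  have col_W: "col W i = char_vec n (S i)" if "i < k" for i unfolding W_def using that by simp
  have "k \<le> num_pos_eigenvalues M + 1"
  proof (rule num_pos_eigenvalues_lower_bound[OF M W C])
    fix c assume c: "c \<in> carrier_vec k" "c \<noteq> 0\<^sub>v k" and "C *\<^sub>v c = 0\<^sub>v 1"
    then have "(C *\<^sub>v c) $ 0 = 0" by simp
    then have orth: "(\<Sum>i<k. c $ i * (v \<bullet> char_vec n (S i))) = 0"
      using c unfolding C_def by (simp add: scalar_prod_def lessThan_atLeast0 mult.commute)
    obtain i0 where "i0 < k" "c $ i0 \<noteq> 0" using c by (metis eq_vecI carrier_vecD index_zero_vec)
    then have "(\<Sum>i<k. \<Sum>j<k. c $ i * c $ j * (col W i \<bullet> (M *\<^sub>v col W j))) > 0"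
      unfolding M_def using modularity_form_pos[OF A D v assms(10,11) _ _ orth] col_W by simp
    then show "(W *\<^sub>v c) \<bullet> (M *\<^sub>v (W *\<^sub>v c)) > 0"
      unfolding quadratic_form_mult_mat_vec[OF M(1) W c(1)] .
  qed
  then show ?thesis unfolding M_def by simp
qed

end
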